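(* Let $\beta \in \mathcal{P}$ and $\alpha \in E$ satisfy $\alpha^{q+1} = \beta^q + \beta^{q^2+q+1}$, and let $\lambda \in S$. Then the system of equations $$X^{q+1} + \alpha X + \beta = 0, \qquad X^{q^2+1} = \lambda$$ has at most two solutions in $\mathcal{P}$. (In particular, taking $\lambda = 1$, every line of the cyclic presentation of $PG(3,q)$ meets $\mathcal{O}$ in at most two points, so $\mathcal{O}$ is an ovoid of the cyclic presentation of $PG(3,q)$.)
   Context: Let $q = 2^m$, and let $E = \mathbb{F}_{q^4} \supset K = \mathbb{F}_{q^2} \supset F = \mathbb{F}_q$. Define $\mathcal{P} = \{x \in E \mid x^{q^3+q^2+q+1} = 1\}$, $\mathcal{O} = \{x \in E \mid x^{q^2+1} = 1\}$ and $S = \{x \in K \mid x^{q+1} = 1\}$. The cyclic presentation of $PG(3,q)$ has point set $\mathcal{P}$. Its lines are the sets of zeros in $\mathcal{P}$ of polynomials $X^{q+1} + \alpha X + \beta$, where $\beta \in \mathcal{P}$ and $\alpha \in E$ satisfy $\alpha^{q+1} = \beta^q + \beta^{q^2+q+1}$; each such line has $q+1$ points. An ovoid is a set of $q^2+1$ points meeting every line in at most two points. *)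

theory Defs
  imports Main "HOL-Library.Cardinality"
begin

text \<open>The field E = GF(q^4) is modelled as a finite field type 'a with CARD('a) = q^4.
  Subsets of E used in the paper, parametrised by q.\<close>

definition cycP :: "nat \<Rightarrow> ('a::field) set" where
  "cycP q = {x. x ^ (q^3 + q^2 + q + 1) = 1}"

definition subfieldK :: "nat \<Rightarrow> ('a::field) set" where
  "subfieldK q = {x. x ^ (q^2) = x}"

definition cycS :: "nat \<Rightarrow> ('a::field) set" where
  "cycS q = {x \<in> subfieldK q. x ^ (q + 1) = 1}"

end

theory Submission
  imports Defs "HOL-Computational_Algebra.Polynomial" "HOL-Computational_Algebra.Primes"
    "HOL-Number_Theory.Residues"
begin

(* Write y = x^q and z = x^(q^2), so that a common solution x satisfies x y + \<alpha> x + \<beta> = 0 and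
   z x = \<lambda>.  Raising the first relation to the power q^2 (additive, since q is a power of the
   characteristic) gives z^q z + \<alpha>^(q^2) z + \<beta>^(q^2) = 0; multiplying by x y and using
   z^q y = \<lambda>^q, \<lambda>^(q+1) = 1 eliminates z, and then the first relation eliminates y.  What
   remains is a quadratic equation in x with leading coefficient \<beta>^(q^2) \<alpha>, or \<beta>^q when
   \<alpha> = 0, which is nonzero. *)

lemma card_roots_quadratic_le_2:
  fixes a b c :: "'a::idom"
  assumes "a \<noteq> 0"
  shows "card {x. a * x^2 + b * x + c = 0} \<le> 2"
proof -
  have "{x. a * x^2 + b * x + c = 0} = {x. poly [:c, b, a:] x = 0}"
    by (auto simp: algebra_simps power2_eq_square)
  also have "card \<dots> \<le> degree [:c, b, a:]"
    using assms by (intro card_poly_roots_bound) auto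
  also have "\<dots> = 2"
    using assms by simp
  finally show ?thesis .
qed

lemma CHAR_eq_2_if_card_power_of_2:
  assumes "CARD('a::{field,finite}) = 2 ^ k"
  shows "CHAR('a) = 2"
proof -
  have "CHAR('a) > 0"
    by (rule finite_imp_CHAR_pos) simp
  then have "prime CHAR('a)"
    by (rule prime_CHAR_semidom)
  moreover have "CHAR('a) dvd 2 ^ k"
    using CHAR_dvd_CARD[where 'a='a] assms by simp
  ultimately have "CHAR('a) dvd 2"
    by (rule prime_dvd_power)
  with \<open>prime CHAR('a)\<close> show ?thesis
    by (intro primes_dvd_imp_eq) simp_all
qed

lemma minus_power_CHAR_power:
  assumes "prime CHAR('a::comm_ring_1)" "q = CHAR('a) ^ n"
  shows "(- x :: 'a) ^ q = - (x ^ q)"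
proof -
  have "x ^ q + (- x) ^ q = (x + - x) ^ q"
    using freshmans_dream' assms by metis
  also have "\<dots> = 0"
    using assms by (auto simp: power_0_left prime_gt_0_nat)
  finally show ?thesis
    by (simp add: add_eq_0_iff)
qed

lemma quadratic_of_solution_alpha_0:
  fixes \<beta> lam x :: "'a::field"
  assumes char: "prime CHAR('a)" "q = CHAR('a) ^ n"
    and line: "x ^ (q + 1) + \<beta> = 0" and norm: "x ^ (q^2 + 1) = lam"
  shows "\<beta> ^ q * x^2 - lam * \<beta> = 0"
proof -
  define y where "y = x ^ q"
  have xy: "x * y = - \<beta>"
    using line by (simp add: y_def mult.commute eq_neg_iff_add_eq_0)
  have "y * x ^ (q^2) = - (\<beta> ^ q)"
    using arg_cong[OF xy, of "\<lambda>u. u ^ q"] minus_power_CHAR_power[OF char]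
    by (simp add: y_def power_mult_distrib power2_eq_square power_mult mult.commute)
  have "lam * y = x * (y * x ^ (q^2))"
    using norm by (simp add: power_add mult_ac)
  also have "\<dots> = - (\<beta> ^ q * x)"
    by (simp add: \<open>y * x ^ (q^2) = - (\<beta> ^ q)\<close> mult.commute)
  finally have "lam * y = - (\<beta> ^ q * x)" .
  then have "- (lam * \<beta>) = - (\<beta> ^ q * x^2)"
    using arg_cong[OF xy, of "(*) lam"]
    by (metis mult.left_commute mult_minus_right power2_eq_square)
  then show ?thesis
    by simp
qed

(* Read y = x^q, z = x^(q^2), w = z^q, \<mu> = \<lambda>^q, A = \<alpha>^(q^2), B = \<beta>^(q^2). *)
lemma quadratic_elimination:
  fixes x y z w lam \<mu> \<alpha> \<beta> A B :: "'a::comm_ring_1"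
  assumes "x * y + \<alpha> * x + \<beta> = 0" "z * x = lam" "w * y = \<mu>" "\<mu> * lam = 1"
    and "w * z + A * z + B = 0"
  shows "B * \<alpha> * x^2 + (B * \<beta> - 1 + A * \<alpha> * lam) * x + A * lam * \<beta> = 0"
proof -
  have xy: "x * y = - (\<alpha> * x + \<beta>)"
    using assms(1) by (metis add.assoc eq_neg_iff_add_eq_0)
  have "1 + A * lam * y + B * (x * y) = (w * y) * (z * x) + A * (z * x) * y + B * (x * y)"
    using assms(2-4) by (simp add: mult.commute)
  also have "\<dots> = (w * z + A * z + B) * (x * y)"
    by (simp add: algebra_simps)
  also have "\<dots> = 0"
    using assms(5) by simp
  finally have "A * lam * y = - 1 - B * (x * y)"
    by (simp add: eq_neg_iff_add_eq_0 algebra_simps)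
  then have key: "A * lam * y = B * (\<alpha> * x + \<beta>) - 1"
    by (simp add: xy algebra_simps)
  have "B * \<alpha> * x^2 + (B * \<beta> - 1 + A * \<alpha> * lam) * x + A * lam * \<beta>
      = x * (B * (\<alpha> * x + \<beta>) - 1) + A * lam * (\<alpha> * x + \<beta>)"
    by (simp add: algebra_simps power2_eq_square)
  also have "\<dots> = x * (A * lam * y) + A * lam * (\<alpha> * x + \<beta>)"
    by (simp only: key)
  also have "\<dots> = A * lam * (x * y + \<alpha> * x + \<beta>)"
    by (simp add: algebra_simps)
  also have "\<dots> = 0"
    using assms(1) by simp
  finally show ?thesis .
qed

lemma quadratic_of_solution:
  fixes \<alpha> \<beta> lam x :: "'a::field"
  assumes char: "prime CHAR('a)" "q = CHAR('a) ^ n"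
    and lam: "lam ^ (q + 1) = 1"
    and line: "x ^ (q + 1) + \<alpha> * x + \<beta> = 0" and norm: "x ^ (q^2 + 1) = lam"
  shows "\<beta> ^ (q^2) * \<alpha> * x^2 + (\<beta> ^ (q^2 + 1) - 1 + \<alpha> ^ (q^2 + 1) * lam) * x
           + \<alpha> ^ (q^2) * lam * \<beta> = 0"
proof -
  define y z where "y = x ^ q" and "z = x ^ (q^2)"
  have line': "x * y + \<alpha> * x + \<beta> = 0" and zx: "z * x = lam"
    using line norm by (simp_all add: y_def z_def power_add mult.commute)
  have yz: "y ^ (q^2) = z ^ q"
    by (simp add: y_def z_def power2_eq_square mult.commute flip: power_mult)
  have zy: "z ^ q * y = lam ^ q"
    using zx by (simp add: y_def flip: power_mult_distrib)
  have "q^2 = CHAR('a) ^ (n * 2)"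
    by (simp add: char(2) power_mult)
  then have frobenius: "(u + v) ^ (q^2) = u ^ (q^2) + v ^ (q^2)" for u v :: 'a
    by (simp add: freshmans_dream'[OF char(1)])
  have "q > 0"
    using char by (simp add: prime_gt_0_nat)
  then have "0 = (x * y + \<alpha> * x + \<beta>) ^ (q^2)"
    by (simp add: line')
  also have "\<dots> = (x * y) ^ (q^2) + (\<alpha> * x) ^ (q^2) + \<beta> ^ (q^2)"
    by (simp add: frobenius)
  also have "\<dots> = z ^ q * z + \<alpha> ^ (q^2) * z + \<beta> ^ (q^2)"
    by (simp add: power_mult_distrib yz z_def mult.commute)
  finally have conj: "z ^ q * z + \<alpha> ^ (q^2) * z + \<beta> ^ (q^2) = 0"
    by simp
  have "lam ^ q * lam = 1"
    using lam by (simp add: power_add mult.commute)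
  from quadratic_elimination[OF line' zx zy this conj]
  show ?thesis
    by (simp add: power_add mult_ac)
qed

lemma solutions_on_nonzero_quadratic:
  fixes \<alpha> \<beta> lam :: "'a::field"
  assumes char: "prime CHAR('a)" "q = CHAR('a) ^ n"
    and lam: "lam ^ (q + 1) = 1" and "\<beta> \<noteq> 0"
  obtains a b c where "a \<noteq> 0"
    and "\<And>x. x ^ (q + 1) + \<alpha> * x + \<beta> = 0 \<Longrightarrow> x ^ (q^2 + 1) = lam \<Longrightarrow> a * x^2 + b * x + c = 0"
proof (cases "\<alpha> = 0")
  case True
  show thesis
  proof (rule that)
    show "\<beta> ^ q \<noteq> 0"
      using \<open>\<beta> \<noteq> 0\<close> by simp
    fix x
    assume "x ^ (q + 1) + \<alpha> * x + \<beta> = 0" and norm: "x ^ (q^2 + 1) = lam"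
    with True have "\<beta> ^ q * x^2 - lam * \<beta> = 0"
      by (intro quadratic_of_solution_alpha_0[OF char _ norm]) simp
    then show "\<beta> ^ q * x^2 + 0 * x + - (lam * \<beta>) = 0"
      by simp
  qed
next
  case False
  show thesis
  proof (rule that)
    show "\<beta> ^ (q^2) * \<alpha> \<noteq> 0"
      using \<open>\<beta> \<noteq> 0\<close> False by simp
    fix x
    assume "x ^ (q + 1) + \<alpha> * x + \<beta> = 0" and "x ^ (q^2 + 1) = lam"
    then show "\<beta> ^ (q^2) * \<alpha> * x^2 + (\<beta> ^ (q^2 + 1) - 1 + \<alpha> ^ (q^2 + 1) * lam) * x
        + \<alpha> ^ (q^2) * lam * \<beta> = 0"
      by (rule quadratic_of_solution[OF char lam])
  qed
qed

theorem theorem3p2: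
  fixes m q :: nat and \<alpha> \<beta> lam :: "'a::{field,finite}"
  assumes "q = 2 ^ m"
    and "CARD('a) = q ^ 4"
    and "\<beta> \<in> cycP q"
    and "\<alpha> ^ (q + 1) = \<beta> ^ q + \<beta> ^ (q^2 + q + 1)"
    and "lam \<in> cycS q"
  shows "card {x \<in> cycP q. x ^ (q + 1) + \<alpha> * x + \<beta> = 0 \<and> x ^ (q^2 + 1) = lam} \<le> 2"
proof -
  have "CHAR('a) = 2"
    using CHAR_eq_2_if_card_power_of_2[of "m * 4"] assms(1,2) by (simp add: power_mult)
  then have char: "prime CHAR('a)" "q = CHAR('a) ^ m"
    using assms(1) by simp_all
  have lam: "lam ^ (q + 1) = 1"
    using assms(5) by (simp add: cycS_def)
  have \<beta>: "\<beta> \<noteq> 0"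
    using assms(3) by (auto simp: cycP_def)
  obtain a b c where "a \<noteq> 0"
    and quadratic: "\<And>x. x ^ (q + 1) + \<alpha> * x + \<beta> = 0 \<Longrightarrow> x ^ (q^2 + 1) = lam \<Longrightarrow> a * x^2 + b * x + c = 0"
    using solutions_on_nonzero_quadratic[OF char lam \<beta>] by blast
  have "card {x \<in> cycP q. x ^ (q + 1) + \<alpha> * x + \<beta> = 0 \<and> x ^ (q^2 + 1) = lam}
      \<le> card {x. a * x^2 + b * x + c = 0}"
    by (rule card_mono) (auto intro: quadratic)
  also have "\<dots> \<le> 2"
    using \<open>a \<noteq> 0\<close> by (rule card_roots_quadratic_le_2)
  finally show ?thesis .
qed

end
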